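(* Let $\|\cdot\|$ be a norm on $\mathbb{R}^d$, let $\mathbf{X}_1,\dots,\mathbf{X}_n$ be i.i.d. random vectors in $\mathbb{R}^d$ with parent vector $\mathbf{X}$ such that the cdf of $\|\mathbf{X}\|$ is absolutely continuous, and let $\mathbf{X}_{(1)},\dots,\mathbf{X}_{(n)}$ be their order statistics with respect to the norm. Then, for $y>0$, $$\mathcal{L}\big(\mathbf{X}_{(1)},\dots,\mathbf{X}_{(n-1)},\mathbf{X}_{(n)}\mid\|\mathbf{X}_{(n)}\|=y\big)=\mathcal{L}\big(\mathbf{Y}_{(1)},\dots,\mathbf{Y}_{(n-1)}\big)\times\mathcal{L}\big(\mathring{\mathbf{X}}_y\big),$$ i.e. conditionally on $\{\|\mathbf{X}_{(n)}\|=y\}$, the vector $(\mathbf{X}_{(1)},\dots,\mathbf{X}_{(n-1)})$ has the law of the norm-ordered statistics of $n-1$ i.i.d. random vectors $\mathbf{Y}_1,\dots,\mathbf{Y}_{n-1}$ with the truncated distribution $F_{\mathbf{X}|\|\mathbf{X}\|}(\cdot\,|\,y)$, and $\mathbf{X}_{(n)}$ is independent of it and has the law of $\mathring{\mathbf{X}}_y$.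
   Context: The norm-ordered statistics are the reordering with $\|\mathbf{X}_{(1)}\|\le\dots\le\|\mathbf{X}_{(n)}\|$. The truncated distribution is $F_{\mathbf{X}|\|\mathbf{X}\|}(\mathbf{B}\,|\,y)=\mathbb{P}(\mathbf{X}\in\mathbf{B}\mid\|\mathbf{X}\|\le y)$. For $y>0$, $\mathring{\mathbf{X}}_y$ is a random vector on the sphere $\mathcal{S}_y=\{\mathbf{x}:\|\mathbf{x}\|=y\}$ with law $\mathbb{P}(\mathring{\mathbf{X}}_y\in\mathbf{B}_y)=\mathbb{P}(\mathbf{X}\in\mathbf{B}_y\mid\|\mathbf{X}\|=y)$ for $\mathbf{B}_y\subseteq\mathcal{S}_y$. Conditioning on null events is in the sense of regular conditional distributions; $\mathcal{L}$ denotes the law and $\times$ the product of laws. *)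

theory Defs
  imports "HOL-Probability.Probability"
begin

definition is_norm :: "('a::real_vector \<Rightarrow> real) \<Rightarrow> bool" where
  "is_norm N \<longleftrightarrow> (\<forall>x. N x = 0 \<longleftrightarrow> x = 0) \<and> (\<forall>c x. N (c *\<^sub>R x) = \<bar>c\<bar> * N x)
     \<and> (\<forall>x y. N (x + y) \<le> N x + N y)"

text \<open>Norm-ordered statistics of the vector (x 0, ..., x (n-1)), 0-indexed:
  ostat N n x k is the (k+1)-th order statistic. Ties are broken by index
  (stable sort); ties have probability zero in the theorem.\<close>
definition ostat :: "('a \<Rightarrow> real) \<Rightarrow> nat \<Rightarrow> (nat \<Rightarrow> 'a) \<Rightarrow> nat \<Rightarrow> 'a" where
  "ostat N n x = (let idx = sort_key (\<lambda>i. N (x i)) [0..<n]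
                  in restrict (\<lambda>k. x (idx ! k)) {..<n})"

text \<open>When P(N X \<le> y) = 0 it is not
  defined in the paper; we then (arbitrarily) return P itself. Such y form a
  null set for the conditioning variable in the theorem.\<close>
definition trunc_law :: "'a measure \<Rightarrow> ('a \<Rightarrow> real) \<Rightarrow> real \<Rightarrow> 'a measure" where
  "trunc_law P N y =
    (if measure P {x\<in>space P. N x \<le> y} > 0
     then density P (\<lambda>x. ennreal (indicator {x. N x \<le> y} x / measure P {x\<in>space P. N x \<le> y}))
     else P)"

text \<open>K is a regular conditional distribution of Z (valued in MZ) given T
  (valued in MT) under M: a probability kernel disintegrating the joint law.\<close>
definition is_rcd :: "'o measure \<Rightarrow> ('o \<Rightarrow> 'b) \<Rightarrow> 'b measure \<Rightarrow> ('o \<Rightarrow> 'c) \<Rightarrow> 'c measure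
    \<Rightarrow> ('c \<Rightarrow> 'b measure) \<Rightarrow> bool" where
  "is_rcd M Z MZ T MT K \<longleftrightarrow>
     (\<forall>t\<in>space MT. prob_space (K t) \<and> sets (K t) = sets MZ) \<and>
     (\<forall>A\<in>sets MZ. (\<lambda>t. emeasure (K t) A) \<in> borel_measurable MT) \<and>
     (\<forall>A\<in>sets MZ. \<forall>B\<in>sets MT.
        emeasure M {\<omega>\<in>space M. Z \<omega> \<in> A \<and> T \<omega> \<in> B}
        = (\<integral>\<^sup>+ t. indicator B t * emeasure (K t) A \<partial>(distr M MT T)))"

end

theory Submission
  imports Defs
begin

text \<open>
  Almost surely the norms of the sample are pairwise distinct, so exactly one index j carries the
  largest norm. Splitting according to j and using exchangeability, the expectation of
  f(X_(1), ..., X_(n)) is n times the integral over P^(n-1) x P of f(sorted ys, x) on the event that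
  every ys_i has norm at most the norm of x. On that event P^(n-1) equals F(t)^(n-1) times the product
  of the truncated laws at t = norm x, F being the cdf of the norm. Disintegrating P along the norm
  with the kernel \<kappa> therefore gives, for every f,
    E f(norm X_(n), X_(1), ..., X_(n)) = n \<integral> F(t)^(n-1) (\<integral> f(t, z) dK_t(z)) dP_norm(t),
  where K_t is the law of the sorted truncated sample times \<kappa>_t. Both sides of the defining
  equation of a regular conditional distribution are instances of this identity.
\<close>

section \<open>Norms on a Euclidean space\<close>

lemma is_norm_zero: "is_norm N \<Longrightarrow> N 0 = 0"
  unfolding is_norm_def by blast

lemma is_norm_minus: "is_norm N \<Longrightarrow> N (- x) = N x"
  unfolding is_norm_def by (metis abs_minus_cancel abs_one mult_1 scaleR_minus1_left)

lemma is_norm_triangle: "is_norm N \<Longrightarrow> N (x + y) \<le> N x + N y"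
  unfolding is_norm_def by blast

lemma is_norm_nonneg: "is_norm N \<Longrightarrow> 0 \<le> N x"
  using is_norm_triangle[of N x "- x"] is_norm_minus[of N x] is_norm_zero[of N] by simp

lemma is_norm_diff_le: "is_norm N \<Longrightarrow> \<bar>N x - N y\<bar> \<le> N (x - y)"
  using is_norm_triangle[of N "x - y" y] is_norm_triangle[of N "y - x" x] is_norm_minus[of N "x - y"]
  by simp

lemma is_norm_sum_le: "is_norm N \<Longrightarrow> N (\<Sum>b\<in>S. f b) \<le> (\<Sum>b\<in>S. N (f b))"
proof (induction S rule: infinite_finite_induct)
  case (insert a S)
  then show ?case using is_norm_triangle[of N "f a" "sum f S"] by simp
qed (simp_all add: is_norm_zero)

lemma is_norm_le_Basis_sum:
  fixes N :: "'a::euclidean_space \<Rightarrow> real"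
  assumes "is_norm N"
  shows "N x \<le> (\<Sum>b\<in>Basis. N b) * norm x"
proof -
  have "N x = N (\<Sum>b\<in>Basis. (x \<bullet> b) *\<^sub>R b)" by (simp add: euclidean_representation)
  also have "\<dots> \<le> (\<Sum>b\<in>Basis. N ((x \<bullet> b) *\<^sub>R b))" by (rule is_norm_sum_le[OF assms])
  also have "\<dots> = (\<Sum>b\<in>Basis. \<bar>x \<bullet> b\<bar> * N b)" using assms by (simp add: is_norm_def)
  also have "\<dots> \<le> (\<Sum>b\<in>Basis. norm x * N b)"
    by (intro sum_mono mult_right_mono is_norm_nonneg[OF assms]) (simp add: Basis_le_norm)
  finally show ?thesis by (simp add: sum_distrib_left mult.commute)
qed

lemma is_norm_lipschitz:
  fixes N :: "'a::euclidean_space \<Rightarrow> real"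
  assumes "is_norm N"
  shows "(\<Sum>b\<in>Basis. N b)-lipschitz_on UNIV N"
proof (rule lipschitz_onI)
  fix x y :: 'a
  have "\<bar>N x - N y\<bar> \<le> (\<Sum>b\<in>Basis. N b) * norm (x - y)"
    using is_norm_diff_le[OF assms] is_norm_le_Basis_sum[OF assms] order_trans by blast
  then show "dist (N x) (N y) \<le> (\<Sum>b\<in>Basis. N b) * dist x y"
    by (simp add: dist_real_def dist_norm)
qed (use is_norm_nonneg[OF assms] in \<open>simp add: sum_nonneg\<close>)

lemma borel_measurable_is_norm:
  fixes N :: "'a::euclidean_space \<Rightarrow> real"
  shows "is_norm N \<Longrightarrow> N \<in> borel_measurable borel"
  by (intro borel_measurable_continuous_onI lipschitz_on_continuous_on[OF is_norm_lipschitz])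

section \<open>Sorting by norm\<close>

definition skip :: "nat \<Rightarrow> nat \<Rightarrow> nat" where
  "skip j i = (if i < j then i else Suc i)"

lemma inj_on_skip: "inj_on (skip j) A"
  by (auto simp: inj_on_def skip_def split: if_splits)

lemma skip_image: "j < Suc m \<Longrightarrow> skip j ` {..<m} = {..<Suc m} - {j}"
proof (intro subset_antisym image_subsetI subsetI)
  fix k assume "j < Suc m" "k \<in> {..<Suc m} - {j}"
  then show "k \<in> skip j ` {..<m}"
    by (intro image_eqI[of _ _ "if k < j then k else k - 1"]) (auto simp: skip_def)
qed (auto simp: skip_def)

lemma skip_less: "j < Suc m \<Longrightarrow> i < m \<Longrightarrow> skip j i < Suc m"
  by (simp add: skip_def)

lemma skip_neq: "skip j i \<noteq> j"
  by (simp add: skip_def)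

lemma remove1_upt_eq_map_skip: "j < Suc m \<Longrightarrow> remove1 j [0..<Suc m] = map (skip j) [0..<m]"
proof -
  assume j: "j < Suc m"
  have "[0..<Suc m] = [0..<j] @ j # [Suc j..<Suc m]"
    using j upt_add_eq_append[of 0 j "Suc m - j"] by (simp add: upt_conv_Cons)
  moreover have "[0..<m] = [0..<j] @ [j..<m]" using j upt_add_eq_append[of 0 j "m - j"] by simp
  moreover have "map (skip j) [0..<j] = [0..<j]" by (intro map_idI) (auto simp: skip_def)
  moreover have "map (skip j) [j..<m] = map Suc [j..<m]" by (intro map_cong) (auto simp: skip_def)
  ultimately show ?thesis by (simp add: remove1_append map_Suc_upt)
qed

lemma insort_key_strict_max: "\<forall>y\<in>set xs. f y < f a \<Longrightarrow> insort_key f a xs = xs @ [a]"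
  by (induction xs) auto

lemma insort_key_snoc_strict_max: "f b < f a \<Longrightarrow> insort_key f b (xs @ [a]) = insort_key f b xs @ [a]"
  by (induction xs) auto

lemma sort_key_strict_max:
  assumes "distinct xs" "a \<in> set xs" "\<forall>y\<in>set xs. y \<noteq> a \<longrightarrow> f y < f a"
  shows "sort_key f xs = sort_key f (remove1 a xs) @ [a]"
  using assms
proof (induction xs)
  case (Cons b xs)
  show ?case
  proof (cases "b = a")
    case True
    with Cons.prems have "\<forall>y\<in>set (sort_key f xs). f y < f a" by auto
    with Cons.prems True show ?thesis by (simp add: insort_key_strict_max remove1_idem)
  next
    case False
    with Cons show ?thesis by (simp add: insort_key_snoc_strict_max)
  qed
qed simp

lemma insort_key_map: "insort_key f (g a) (map g xs) = map g (insort_key (\<lambda>x. f (g x)) a xs)"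
  by (induction xs) auto

lemma sort_key_map: "sort_key f (map g xs) = map g (sort_key (\<lambda>x. f (g x)) xs)"
  by (induction xs) (auto simp: insort_key_map)

lemma insort_key_cong:
  "\<forall>x\<in>insert a (set xs). f x = g x \<Longrightarrow> insort_key f a xs = insort_key g a xs"
  by (induction xs) auto

lemma sort_key_cong: "\<forall>x\<in>set xs. f x = g x \<Longrightarrow> sort_key f xs = sort_key g xs"
  by (induction xs) (auto intro!: insort_key_cong)

lemma ostat_cong: "(\<And>i. i < n \<Longrightarrow> x i = y i) \<Longrightarrow> ostat N n x = ostat N n y"
proof -
  assume eq: "\<And>i. i < n \<Longrightarrow> x i = y i"
  then have "sort_key (\<lambda>i. N (x i)) [0..<n] = sort_key (\<lambda>i. N (y i)) [0..<n]"
    by (intro sort_key_cong) simp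
  moreover have "sort_key (\<lambda>i. N (y i)) [0..<n] ! k < n" if "k < n" for k
    using nth_mem[of k "sort_key (\<lambda>i. N (y i)) [0..<n]"] that by simp
  ultimately show ?thesis
    unfolding ostat_def Let_def by (intro restrict_ext) (simp add: eq)
qed

lemma ostat_strict_max:
  assumes j: "j < Suc m" and max: "\<And>i. i < Suc m \<Longrightarrow> i \<noteq> j \<Longrightarrow> N (x i) < N (x j)"
  shows "restrict (ostat N (Suc m) x) {..<m} = ostat N m (x \<circ> skip j)"
    and "ostat N (Suc m) x m = x j"
proof -
  let ?L = "sort_key (\<lambda>i. N (x (skip j i))) [0..<m]"
  have "sort_key (\<lambda>i. N (x i)) [0..<Suc m] = sort_key (\<lambda>i. N (x i)) (remove1 j [0..<Suc m]) @ [j]"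
    by (rule sort_key_strict_max) (use j max in auto)
  also have "\<dots> = map (skip j) ?L @ [j]"
    by (simp only: remove1_upt_eq_map_skip[OF j] sort_key_map)
  finally have sorted: "sort_key (\<lambda>i. N (x i)) [0..<Suc m] = map (skip j) ?L @ [j]" .
  show "ostat N (Suc m) x m = x j"
    unfolding ostat_def Let_def sorted by (simp add: nth_append)
  show "restrict (ostat N (Suc m) x) {..<m} = ostat N m (x \<circ> skip j)"
    unfolding ostat_def Let_def sorted by (intro restrict_ext) (simp add: nth_append)
qed

lemma measurable_insort_key:
  fixes N :: "'a::topological_space \<Rightarrow> real"
  assumes N: "N \<in> borel_measurable borel" and "a \<in> I" "set xs \<subseteq> I"
  shows "(\<lambda>x. insort_key (\<lambda>i. N (x i)) a xs) \<in> PiM I (\<lambda>_. borel) \<rightarrow>\<^sub>M count_space UNIV"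
  using assms(3)
proof (induction xs)
  case (Cons b xs)
  have IH: "(\<lambda>x. insort_key (\<lambda>i. N (x i)) a xs) \<in> PiM I (\<lambda>_. borel) \<rightarrow>\<^sub>M count_space UNIV"
    using Cons by simp
  have "(\<lambda>x. N (x i)) \<in> borel_measurable (PiM I (\<lambda>_. borel))" if "i \<in> I" for i
    using that by (intro measurable_compose[OF measurable_component_singleton[of i I] N])
  then have "{x \<in> space (PiM I (\<lambda>_. borel)). N (x a) \<le> N (x b)} \<in> sets (PiM I (\<lambda>_. borel))"
    using Cons.prems \<open>a \<in> I\<close> by (intro borel_measurable_le) auto
  moreover have "(\<lambda>x. b # insort_key (\<lambda>i. N (x i)) a xs) \<in> PiM I (\<lambda>_. borel) \<rightarrow>\<^sub>M count_space UNIV"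
    by (rule measurable_compose[OF IH]) simp
  ultimately show ?case
    by (simp only: insort_key.simps) (rule measurable_If; simp)
qed simp

lemma measurable_sort_key:
  fixes N :: "'a::topological_space \<Rightarrow> real" and xs :: "nat list"
  assumes N: "N \<in> borel_measurable borel" and "set xs \<subseteq> I"
  shows "(\<lambda>x. sort_key (\<lambda>i. N (x i)) xs) \<in> PiM I (\<lambda>_. borel) \<rightarrow>\<^sub>M count_space UNIV"
  using assms(2)
proof (induction xs)
  case (Cons a xs)
  let ?ins = "\<lambda>ys x. if set ys \<subseteq> I then insort_key (\<lambda>i. N (x i)) a ys else []"
  have IH: "(\<lambda>x. sort_key (\<lambda>i. N (x i)) xs) \<in> PiM I (\<lambda>_. borel) \<rightarrow>\<^sub>M count_space UNIV"
    using Cons by simp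
  have "(\<lambda>x. ?ins (sort_key (\<lambda>i. N (x i)) xs) x) \<in> PiM I (\<lambda>_. borel) \<rightarrow>\<^sub>M count_space UNIV"
  proof (rule measurable_compose_countable[OF _ IH])
    fix ys :: "nat list"
    show "?ins ys \<in> PiM I (\<lambda>_. borel) \<rightarrow>\<^sub>M count_space UNIV"
      using Cons.prems by (cases "set ys \<subseteq> I") (auto intro: measurable_insort_key[OF N])
  qed
  with Cons.prems show ?case by simp
qed simp

lemma measurable_ostat[measurable]:
  fixes N :: "'a::topological_space \<Rightarrow> real"
  assumes N: "N \<in> borel_measurable borel"
  shows "ostat N n \<in> PiM {..<n} (\<lambda>_. borel) \<rightarrow>\<^sub>M PiM {..<n} (\<lambda>_. borel)"
proof -
  let ?idx = "\<lambda>x. sort_key (\<lambda>i. N (x i)) [0..<n]"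
  have idx: "?idx \<in> PiM {..<n} (\<lambda>_. borel) \<rightarrow>\<^sub>M count_space UNIV"
    by (rule measurable_sort_key[OF N]) auto
  have "(\<lambda>x. x (?idx x ! k)) \<in> PiM {..<n} (\<lambda>_. borel) \<rightarrow>\<^sub>M borel" if k: "k < n" for k
  proof -
    let ?eval = "\<lambda>is x. if is ! k < n then x (is ! k) else undefined"
    have "(\<lambda>x. ?eval (?idx x) x) \<in> PiM {..<n} (\<lambda>_. borel) \<rightarrow>\<^sub>M borel"
    proof (rule measurable_compose_countable[OF _ idx])
      show "?eval is \<in> PiM {..<n} (\<lambda>_. borel) \<rightarrow>\<^sub>M borel" for "is"
        by (cases "is ! k < n") auto
    qed
    moreover have "?idx x ! k < n" for x
      using nth_mem[of k "?idx x"] k by simp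
    ultimately show ?thesis by simp
  qed
  then show ?thesis unfolding ostat_def Let_def by (intro measurable_restrict) auto
qed

section \<open>Independent identically distributed samples\<close>

lemma (in prob_space) distr_reindex_iid:
  fixes X :: "'i \<Rightarrow> 'a \<Rightarrow> 'b::topological_space"
  assumes indep: "indep_vars (\<lambda>_. borel) X I" and "I \<noteq> {}"
    and rv: "\<And>i. i \<in> I \<Longrightarrow> X i \<in> borel_measurable M"
    and law: "\<And>i. i \<in> I \<Longrightarrow> distr M borel (X i) = P"
    and g: "inj_on g J" "g \<in> J \<rightarrow> I"
  shows "distr M (PiM J (\<lambda>_. borel)) (\<lambda>\<omega>. \<lambda>j\<in>J. X (g j) \<omega>) = PiM J (\<lambda>_. P)"
proof -
  obtain i where "i \<in> I" using \<open>I \<noteq> {}\<close> by blast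
  then have P: "prob_space P" "sets P = sets borel"
    using law[of i] rv[of i] by (auto intro: prob_space_distr)
  let ?sample = "\<lambda>\<omega>. \<lambda>i\<in>I. X i \<omega>" and ?reindex = "\<lambda>x. \<lambda>j\<in>J. x (g j)"
  have sample: "?sample \<in> M \<rightarrow>\<^sub>M PiM I (\<lambda>_. borel)"
    using rv by (intro measurable_restrict) auto
  have reindex: "?reindex \<in> PiM I (\<lambda>_. borel) \<rightarrow>\<^sub>M PiM J (\<lambda>_. borel)"
    using g by (intro measurable_restrict measurable_component_singleton) auto
  have "distr M (PiM I (\<lambda>_. borel)) ?sample = PiM I (\<lambda>i. distr M borel (X i))"
    using indep_vars_iff_distr_eq_PiM'[OF \<open>I \<noteq> {}\<close> rv] indep by simp
  also have "\<dots> = PiM I (\<lambda>_. P)"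
    using law by (intro PiM_cong) auto
  finally have joint: "distr M (PiM I (\<lambda>_. borel)) ?sample = PiM I (\<lambda>_. P)" .
  have "distr M (PiM J (\<lambda>_. borel)) (\<lambda>\<omega>. \<lambda>j\<in>J. X (g j) \<omega>)
      = distr (distr M (PiM I (\<lambda>_. borel)) ?sample) (PiM J (\<lambda>_. borel)) ?reindex"
    using g by (subst distr_distr[OF reindex sample]) (auto intro!: distr_cong simp: Pi_iff)
  also have "\<dots> = distr (PiM I (\<lambda>_. P)) (PiM J (\<lambda>_. P)) ?reindex"
    unfolding joint using P by (intro distr_cong) (auto cong: sets_PiM_cong)
  also have "\<dots> = PiM J (\<lambda>_. P)"
    using distr_PiM_reindex[of I "\<lambda>_. P" g J] P g by simp
  finally show ?thesis .
qed

lemma (in prob_space) distr_single_out_iid: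
  fixes X :: "nat \<Rightarrow> 'a \<Rightarrow> 'b::topological_space"
  assumes indep: "indep_vars (\<lambda>_. borel) X {..<Suc m}"
    and rv: "\<And>i. i < Suc m \<Longrightarrow> X i \<in> borel_measurable M"
    and law: "\<And>i. i < Suc m \<Longrightarrow> distr M borel (X i) = P"
    and j: "j < Suc m"
  shows "distr M (PiM {..<m} (\<lambda>_. borel) \<Otimes>\<^sub>M borel) (\<lambda>\<omega>. (\<lambda>i\<in>{..<m}. X (skip j i) \<omega>, X j \<omega>))
    = PiM {..<m} (\<lambda>_. P) \<Otimes>\<^sub>M P"
proof -
  let ?A = "skip j ` {..<m}"
  let ?rest = "\<lambda>\<omega>. \<lambda>i\<in>?A. X i \<omega>" and ?at = "\<lambda>\<omega>. \<lambda>i\<in>{j}. X i \<omega>"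
  let ?reindex = "\<lambda>x. \<lambda>i\<in>{..<m}. x (skip j i)" and ?eval = "\<lambda>y. y j"
  have "indep_var (PiM ?A (\<lambda>_. borel)) ?rest (PiM {j} (\<lambda>_. borel)) ?at"
    using j skip_image[OF j] by (intro indep_var_restrict[OF indep]) auto
  then have rest: "?rest \<in> M \<rightarrow>\<^sub>M PiM ?A (\<lambda>_. borel)" and at: "?at \<in> M \<rightarrow>\<^sub>M PiM {j} (\<lambda>_. borel)"
    and joint: "distr M (PiM ?A (\<lambda>_. borel) \<Otimes>\<^sub>M PiM {j} (\<lambda>_. borel)) (\<lambda>\<omega>. (?rest \<omega>, ?at \<omega>))
      = distr M (PiM ?A (\<lambda>_. borel)) ?rest \<Otimes>\<^sub>M distr M (PiM {j} (\<lambda>_. borel)) ?at"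
    by (simp_all add: indep_var_distribution_eq)
  have reindex: "?reindex \<in> PiM ?A (\<lambda>_. borel) \<rightarrow>\<^sub>M PiM {..<m} (\<lambda>_. borel)"
    by (intro measurable_restrict measurable_component_singleton) auto
  have eval: "?eval \<in> PiM {j} (\<lambda>_. borel) \<rightarrow>\<^sub>M borel"
    by (intro measurable_component_singleton) auto
  have "prob_space (distr M (PiM {j} (\<lambda>_. borel)) ?at)" by (rule prob_space_distr[OF at])
  then have "prob_space (distr (distr M (PiM {j} (\<lambda>_. borel)) ?at) borel ?eval)"
    by (rule prob_space.prob_space_distr) (simp add: eval)
  then have finite: "sigma_finite_measure (distr (distr M (PiM {j} (\<lambda>_. borel)) ?at) borel ?eval)"
    by (rule prob_space_imp_sigma_finite)
  have "distr M (PiM {..<m} (\<lambda>_. borel) \<Otimes>\<^sub>M borel) (\<lambda>\<omega>. (\<lambda>i\<in>{..<m}. X (skip j i) \<omega>, X j \<omega>))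
      = distr (distr M (PiM ?A (\<lambda>_. borel) \<Otimes>\<^sub>M PiM {j} (\<lambda>_. borel)) (\<lambda>\<omega>. (?rest \<omega>, ?at \<omega>)))
          (PiM {..<m} (\<lambda>_. borel) \<Otimes>\<^sub>M borel) (\<lambda>(x, y). (?reindex x, ?eval y))"
    using reindex eval rest at by (subst distr_distr) (auto intro!: distr_cong restrict_ext)
  also have "\<dots> = distr (distr M (PiM ?A (\<lambda>_. borel)) ?rest) (PiM {..<m} (\<lambda>_. borel)) ?reindex
      \<Otimes>\<^sub>M distr (distr M (PiM {j} (\<lambda>_. borel)) ?at) borel ?eval"
    unfolding joint by (rule pair_measure_distr[symmetric, OF _ _ finite]) (simp_all add: reindex eval)
  also have "\<dots> = distr M (PiM {..<m} (\<lambda>_. borel)) (\<lambda>\<omega>. \<lambda>i\<in>{..<m}. X (skip j i) \<omega>) \<Otimes>\<^sub>M distr M borel (X j)"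
    using reindex eval rest at
    by (simp add: distr_distr comp_def inj_image_mem_iff[OF inj_on_skip] cong: restrict_cong)
  also have "\<dots> = PiM {..<m} (\<lambda>_. P) \<Otimes>\<^sub>M P"
    using j skip_image[OF j] rv law inj_on_skip
    by (subst distr_reindex_iid[OF indep, where P = P]) auto
  finally show ?thesis .
qed

section \<open>Disintegration along the norm\<close>

lemma is_rcd_kernel:
  assumes "is_rcd P (\<lambda>x. x) MX T MT \<kappa>"
  shows "\<And>t. t \<in> space MT \<Longrightarrow> prob_space (\<kappa> t)" "\<And>t. t \<in> space MT \<Longrightarrow> sets (\<kappa> t) = sets MX"
    and "\<kappa> \<in> MT \<rightarrow>\<^sub>M subprob_algebra MX"
  using assms unfolding is_rcd_def by (auto intro!: measurable_subprob_algebra prob_space_imp_subprob_space)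

lemma is_rcd_distr_graph:
  fixes P :: "'a::topological_space measure" and N :: "'a \<Rightarrow> 'b::topological_space"
  assumes P: "prob_space P" "sets P = sets borel" and N: "N \<in> borel_measurable borel"
    and rcd: "is_rcd P (\<lambda>x. x) borel N borel \<kappa>"
  shows "distr P (borel \<Otimes>\<^sub>M borel) (\<lambda>x. (N x, x)) = distr P borel N \<bind> (\<lambda>t. return borel t \<Otimes>\<^sub>M \<kappa> t)"
    (is "?graph = ?bind")
proof (rule measure_eqI_generator_eq[OF Int_stable_pair_measure_generator, where \<Omega> = UNIV and A = "\<lambda>_. UNIV"])
  note \<kappa> = is_rcd_kernel[OF rcd, simplified]
  have graph: "(\<lambda>x. (N x, x)) \<in> P \<rightarrow>\<^sub>M borel \<Otimes>\<^sub>M borel"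
    using N by (simp add: measurable_cong_sets[OF P(2) refl])
  have kernel: "(\<lambda>t. return borel t \<Otimes>\<^sub>M \<kappa> t) \<in> distr P borel N \<rightarrow>\<^sub>M subprob_algebra (borel \<Otimes>\<^sub>M borel)"
    using \<kappa> by (simp add: measurable_pair_measure[OF return_measurable])
  have sets_kernel: "sets (return borel t \<Otimes>\<^sub>M \<kappa> t) = sets (borel \<Otimes>\<^sub>M borel)" for t
    using \<kappa> by (intro sets_pair_measure_cong) auto
  show "sets ?graph = sigma_sets UNIV {a \<times> b |a b. a \<in> sets borel \<and> b \<in> sets borel}"
    by (simp add: sets_pair_measure)
  show "sets ?bind = sigma_sets UNIV {a \<times> b |a b. a \<in> sets borel \<and> b \<in> sets borel}"
    by (subst sets_bind[OF sets_kernel]) (auto simp: sets_pair_measure)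
  interpret graph: prob_space ?graph
    by (rule prob_space.prob_space_distr[OF P(1) graph])
  show "emeasure ?graph UNIV \<noteq> \<infinity>" by simp
  fix Y :: "('b \<times> 'a) set" assume "Y \<in> {a \<times> b |a b. a \<in> sets borel \<and> b \<in> sets borel}"
  then obtain a b where Y: "Y = a \<times> b" and ab: "a \<in> sets borel" "b \<in> sets borel" by auto
  have "emeasure ?graph Y = emeasure P {x\<in>space P. x \<in> b \<and> N x \<in> a}"
    using ab by (subst emeasure_distr[OF graph]) (auto simp: Y intro: arg_cong[where f = "emeasure P"])
  also have "\<dots> = (\<integral>\<^sup>+ t. indicator a t * emeasure (\<kappa> t) b \<partial>distr P borel N)"
    using rcd ab unfolding is_rcd_def by auto
  also have "\<dots> = (\<integral>\<^sup>+ t. emeasure (return borel t \<Otimes>\<^sub>M \<kappa> t) Y \<partial>distr P borel N)"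
  proof (rule nn_integral_cong)
    fix t
    interpret \<kappa>t: prob_space "\<kappa> t" using \<kappa> by simp
    show "indicator a t * emeasure (\<kappa> t) b = emeasure (return borel t \<Otimes>\<^sub>M \<kappa> t) Y"
      using ab \<kappa> by (simp add: Y \<kappa>t.emeasure_pair_measure_Times)
  qed
  also have "\<dots> = emeasure ?bind Y"
    using ab by (intro emeasure_bind[symmetric, OF _ kernel]) (auto simp: Y)
  finally show "emeasure ?graph Y = emeasure ?bind Y" .
qed (auto intro!: exI[of _ UNIV])

lemma is_rcd_nn_integral:
  fixes P :: "'a::topological_space measure" and N :: "'a \<Rightarrow> 'b::topological_space"
  assumes P: "prob_space P" "sets P = sets borel" and N: "N \<in> borel_measurable borel"
    and rcd: "is_rcd P (\<lambda>x. x) borel N borel \<kappa>"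
    and g: "g \<in> borel_measurable (borel \<Otimes>\<^sub>M borel)"
  shows "(\<integral>\<^sup>+x. g (N x, x) \<partial>P) = (\<integral>\<^sup>+t. \<integral>\<^sup>+x. g (t, x) \<partial>\<kappa> t \<partial>distr P borel N)"
proof -
  note \<kappa> = is_rcd_kernel[OF rcd, simplified]
  have graph: "(\<lambda>x. (N x, x)) \<in> P \<rightarrow>\<^sub>M borel \<Otimes>\<^sub>M borel"
    using N by (simp add: measurable_cong_sets[OF P(2) refl])
  have kernel: "(\<lambda>t. return borel t \<Otimes>\<^sub>M \<kappa> t) \<in> distr P borel N \<rightarrow>\<^sub>M subprob_algebra (borel \<Otimes>\<^sub>M borel)"
    using \<kappa> by (simp add: measurable_pair_measure[OF return_measurable])
  have "(\<integral>\<^sup>+x. g (N x, x) \<partial>P) = (\<integral>\<^sup>+z. g z \<partial>distr P (borel \<Otimes>\<^sub>M borel) (\<lambda>x. (N x, x)))"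
    using g by (simp add: nn_integral_distr[OF graph])
  also have "\<dots> = (\<integral>\<^sup>+t. \<integral>\<^sup>+z. g z \<partial>(return borel t \<Otimes>\<^sub>M \<kappa> t) \<partial>distr P borel N)"
    unfolding is_rcd_distr_graph[OF assms(1-4)] by (rule nn_integral_bind[OF g kernel])
  also have "\<dots> = (\<integral>\<^sup>+t. \<integral>\<^sup>+x. g (t, x) \<partial>\<kappa> t \<partial>distr P borel N)"
  proof (rule nn_integral_cong)
    fix t
    interpret \<kappa>t: prob_space "\<kappa> t" using \<kappa> by simp
    have "g \<in> borel_measurable (return borel t \<Otimes>\<^sub>M \<kappa> t)" "g \<in> borel_measurable (borel \<Otimes>\<^sub>M \<kappa> t)"
      using g \<kappa> by (simp_all cong: measurable_cong_sets sets_pair_measure_cong)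
    then show "(\<integral>\<^sup>+z. g z \<partial>(return borel t \<Otimes>\<^sub>M \<kappa> t)) = (\<integral>\<^sup>+x. g (t, x) \<partial>\<kappa> t)"
      by (simp add: \<kappa>t.nn_integral_fst[symmetric] nn_integral_return \<kappa>t.borel_measurable_nn_integral_fst)
  qed
  finally show ?thesis .
qed

section \<open>Truncated laws\<close>

lemma prod_indicator:
  "finite I \<Longrightarrow> (\<Prod>i\<in>I. indicator (A i) (f i) :: 'b::comm_semiring_1) = indicator {g. \<forall>i\<in>I. g i \<in> A i} f"
  by (induction I rule: finite_induct) (auto simp: indicator_def)

lemma PiM_density:
  assumes "finite I" and M: "\<And>i. prob_space (M i)" and D: "\<And>i. prob_space (density (M i) (f i))"
    and f: "\<And>i. f i \<in> borel_measurable (M i)"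
  shows "PiM I (\<lambda>i. density (M i) (f i)) = density (PiM I M) (\<lambda>x. \<Prod>i\<in>I. f i (x i))"
proof -
  interpret M: product_prob_space M I
    using M by (simp add: product_prob_space_def product_prob_space_axioms_def product_sigma_finite_def prob_space_imp_sigma_finite)
  interpret D: product_prob_space "\<lambda>i. density (M i) (f i)" I
    using D by (simp add: product_prob_space_def product_prob_space_axioms_def product_sigma_finite_def prob_space_imp_sigma_finite)
  have density: "(\<lambda>x. \<Prod>i\<in>I. f i (x i)) \<in> borel_measurable (PiM I M)"
    using f by (intro borel_measurable_prod_ennreal) (auto intro: measurable_compose[OF measurable_component_singleton])
  show ?thesis
  proof (rule D.PiM_eqI[symmetric])
    fix C assume C: "\<And>i. i \<in> I \<Longrightarrow> C i \<in> sets (density (M i) (f i))"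
    have "emeasure (density (PiM I M) (\<lambda>x. \<Prod>i\<in>I. f i (x i))) (PiE I C)
        = (\<integral>\<^sup>+x. (\<Prod>i\<in>I. f i (x i) * indicator (C i) (x i)) \<partial>PiM I M)"
    proof (subst emeasure_density[OF density])
      show "PiE I C \<in> sets (PiM I M)"
        using C \<open>finite I\<close> by (intro sets_PiM_I_finite) auto
      show "(\<integral>\<^sup>+x. (\<Prod>i\<in>I. f i (x i)) * indicator (PiE I C) x \<partial>PiM I M)
          = (\<integral>\<^sup>+x. (\<Prod>i\<in>I. f i (x i) * indicator (C i) (x i)) \<partial>PiM I M)"
        using \<open>finite I\<close> by (intro nn_integral_cong)
          (auto simp: prod.distrib prod_indicator space_PiM PiE_def Pi_def extensional_def indicator_def)
    qed
    also have "\<dots> = (\<Prod>i\<in>I. \<integral>\<^sup>+x. f i x * indicator (C i) x \<partial>M i)"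
      using C f \<open>finite I\<close> by (intro M.product_nn_integral_prod) auto
    also have "\<dots> = (\<Prod>i\<in>I. emeasure (density (M i) (f i)) (C i))"
      using C f by (intro prod.cong refl emeasure_density[symmetric]) auto
    finally show "emeasure (density (PiM I M) (\<lambda>x. \<Prod>i\<in>I. f i (x i))) (PiE I C)
        = (\<Prod>i\<in>I. emeasure (density (M i) (f i)) (C i))" .
  qed (use \<open>finite I\<close> in \<open>auto cong: sets_PiM_cong\<close>)
qed

locale norm_law = P: prob_space P
  for P :: "'a::topological_space measure" and N :: "'a \<Rightarrow> real" and m :: nat +
  assumes sets_P[measurable_cong]: "sets P = sets borel"
    and measurable_N[measurable]: "N \<in> borel_measurable borel"
begin

abbreviation "Bm \<equiv> PiM {..<m} (\<lambda>_. borel :: 'a measure)"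
abbreviation "Pm \<equiv> PiM {..<m} (\<lambda>_. P)"
abbreviation "Tm t \<equiv> PiM {..<m} (\<lambda>_. trunc_law P N t)"

definition norm_cdf :: "real \<Rightarrow> real" where
  "norm_cdf t = measure P {x. N x \<le> t}"

definition all_le :: "real \<Rightarrow> (nat \<Rightarrow> 'a) set" where
  "all_le t = {ys. \<forall>i<m. N (ys i) \<le> t}"

definition when_top :: "((nat \<Rightarrow> 'a) \<times> 'a \<Rightarrow> ennreal) \<Rightarrow> (nat \<Rightarrow> 'a) \<times> 'a \<Rightarrow> ennreal" where
  "when_top f = (\<lambda>(ys, x). indicator (all_le (N x)) ys * f (ostat N m ys, x))"

lemma space_P[simp]: "space P = UNIV"
  using sets_eq_imp_space_eq[OF sets_P] by simp

lemma sets_Pm[measurable_cong]: "sets Pm = sets Bm"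
  by (simp cong: sets_PiM_cong add: sets_P)

lemma prob_space_Pm: "prob_space Pm"
  by (intro prob_space_PiM P.prob_space_axioms)

lemma emeasure_le_eq_norm_cdf: "emeasure P {x. N x \<le> t} = ennreal (norm_cdf t)"
  unfolding norm_cdf_def by (rule P.emeasure_eq_measure)

lemma norm_cdf_nonneg: "0 \<le> norm_cdf t"
  unfolding norm_cdf_def by simp

lemma borel_measurable_norm_cdf[measurable]: "norm_cdf \<in> borel_measurable borel"
  unfolding norm_cdf_def by (intro borel_measurable_mono monoI P.finite_measure_mono) auto

lemma pred_all_le[measurable]:
  assumes f: "f \<in> L \<rightarrow>\<^sub>M Bm" and g: "g \<in> borel_measurable L"
  shows "Measurable.pred L (\<lambda>z. f z \<in> all_le (g z))"
proof -
  have "(\<lambda>z. N (f z i)) \<in> borel_measurable L" if "i < m" for i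
  proof (rule measurable_compose[OF _ measurable_N])
    show "(\<lambda>z. f z i) \<in> borel_measurable L"
      using measurable_compose[OF f measurable_component_singleton[of i "{..<m}"]] that by simp
  qed
  then have "{z \<in> space L. \<forall>i\<in>{..<m}. N (f z i) \<le> g z} \<in> sets L"
    using g by (intro sets.sets_Collect_finite_All borel_measurable_le) auto
  then show ?thesis
    unfolding pred_def all_le_def by (simp only: mem_Collect_eq lessThan_iff Ball_def)
qed

lemma measurable_when_top[measurable]:
  assumes [measurable]: "f \<in> borel_measurable (Bm \<Otimes>\<^sub>M borel)"
  shows "when_top f \<in> borel_measurable (Bm \<Otimes>\<^sub>M borel)"
  unfolding when_top_def by measurable

lemma emeasure_all_le: "emeasure Pm (all_le t \<inter> space Pm) = ennreal (norm_cdf t) ^ m"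
proof -
  interpret Pm: product_prob_space "\<lambda>_. P" "{..<m}" ..
  have "all_le t \<inter> space Pm = PiE {..<m} (\<lambda>_. {x. N x \<le> t})"
    by (auto simp: all_le_def space_PiM)
  then show ?thesis by (simp add: Pm.emeasure_PiM emeasure_le_eq_norm_cdf)
qed

lemma trunc_law_pos:
  "0 < norm_cdf t \<Longrightarrow> trunc_law P N t = density P (\<lambda>x. ennreal (indicator {x. N x \<le> t} x / norm_cdf t))"
  by (simp add: trunc_law_def norm_cdf_def)

lemma trunc_law_nonpos: "\<not> 0 < norm_cdf t \<Longrightarrow> trunc_law P N t = P"
  by (simp add: trunc_law_def norm_cdf_def)

lemma prob_space_trunc_law: "prob_space (trunc_law P N t)"
proof (cases "0 < norm_cdf t")
  case True
  have "emeasure (trunc_law P N t) UNIV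
      = (\<integral>\<^sup>+x. ennreal (indicator {x. N x \<le> t} x / norm_cdf t) * indicator UNIV x \<partial>P)"
    unfolding trunc_law_pos[OF True] by (rule emeasure_density) auto
  also have "\<dots> = (\<integral>\<^sup>+x. ennreal (1 / norm_cdf t) * indicator {x. N x \<le> t} x \<partial>P)"
    by (intro nn_integral_cong) (auto simp: indicator_def)
  also have "\<dots> = ennreal (1 / norm_cdf t) * ennreal (norm_cdf t)"
    by (simp add: nn_integral_cmult_indicator emeasure_le_eq_norm_cdf)
  also have "\<dots> = 1"
    using True by (simp add: ennreal_mult[symmetric])
  finally show ?thesis
    by (intro prob_spaceI) (simp add: trunc_law_pos[OF True])
qed (simp add: trunc_law_nonpos P.prob_space_axioms)

lemma sets_trunc_law: "sets (trunc_law P N t) = sets borel"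
  by (cases "0 < norm_cdf t") (simp_all add: trunc_law_pos trunc_law_nonpos sets_P)

lemma sets_Tm: "sets (Tm t) = sets Bm"
  by (simp cong: sets_PiM_cong add: sets_trunc_law)

lemma nn_integral_Tm:
  assumes h: "h \<in> borel_measurable Bm"
  shows "(\<integral>\<^sup>+ys. h ys \<partial>Tm t) = (if 0 < norm_cdf t
    then ennreal (1 / norm_cdf t) ^ m * (\<integral>\<^sup>+ys. indicator (all_le t) ys * h ys \<partial>Pm) else \<integral>\<^sup>+ys. h ys \<partial>Pm)"
proof (cases "0 < norm_cdf t")
  case True
  have "Tm t = density Pm (\<lambda>ys. \<Prod>i<m. ennreal (indicator {x. N x \<le> t} (ys i) / norm_cdf t))"
    unfolding trunc_law_pos[OF True]
    by (rule PiM_density) (auto simp: P.prob_space_axioms prob_space_trunc_law simp flip: trunc_law_pos[OF True])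
  moreover have "(\<Prod>i<m. ennreal (indicator {x. N x \<le> t} (ys i) / norm_cdf t)) = ennreal (1 / norm_cdf t) ^ m * indicator (all_le t) ys"
    for ys
  proof -
    have "(\<Prod>i<m. ennreal (indicator {x. N x \<le> t} (ys i) / norm_cdf t))
        = (\<Prod>i<m. ennreal (1 / norm_cdf t) * indicator {x. N x \<le> t} (ys i))"
      by (intro prod.cong) (auto simp: indicator_def)
    also have "\<dots> = ennreal (1 / norm_cdf t) ^ m * indicator (all_le t) ys"
      by (simp add: prod.distrib prod_indicator all_le_def Ball_def)
    finally show ?thesis .
  qed
  ultimately show ?thesis
    using True h by (simp add: nn_integral_density nn_integral_cmult mult.assoc)
qed (simp add: trunc_law_nonpos)

lemma nn_integral_all_le:
  assumes h: "h \<in> borel_measurable Bm"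
  shows "(\<integral>\<^sup>+ys. indicator (all_le t) ys * h ys \<partial>Pm) = ennreal (norm_cdf t) ^ m * (\<integral>\<^sup>+ys. h ys \<partial>Tm t)"
proof (cases "0 < norm_cdf t")
  case True
  then have "ennreal (norm_cdf t) ^ m * ennreal (1 / norm_cdf t) ^ m = 1"
    by (simp add: ennreal_mult[symmetric] power_mult_distrib[symmetric])
  with True show ?thesis
    by (simp add: nn_integral_Tm[OF h] mult.assoc[symmetric])
next
  case False
  then have "norm_cdf t = 0" using norm_cdf_nonneg[of t] by simp
  show ?thesis
  proof (cases "m = 0")
    case False
    have "AE ys in Pm. ys \<notin> all_le t"
      using emeasure_all_le[of t] \<open>norm_cdf t = 0\<close> False by (intro AE_I'[of "all_le t \<inter> space Pm"]) auto
    moreover have "(\<lambda>ys. indicator (all_le t) ys * h ys) \<in> borel_measurable Pm"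
      using h by (simp cong: measurable_cong_sets add: sets_Pm)
    ultimately have "(\<integral>\<^sup>+ys. indicator (all_le t) ys * h ys \<partial>Pm) = 0"
      by (subst nn_integral_0_iff_AE) (auto elim!: AE_mp)
    with \<open>norm_cdf t = 0\<close> False show ?thesis by simp
  next
    case True
    then have "all_le t = UNIV" unfolding all_le_def by simp
    with True show ?thesis by (simp add: trunc_law_nonpos[OF False])
  qed
qed

lemma measurable_nn_integral_Tm:
  assumes h: "h \<in> borel_measurable (S \<Otimes>\<^sub>M Bm)" and \<tau>: "\<tau> \<in> borel_measurable S"
  shows "(\<lambda>s. \<integral>\<^sup>+ys. h (s, ys) \<partial>Tm (\<tau> s)) \<in> borel_measurable S"
proof -
  interpret Pm: prob_space Pm by (rule prob_space_Pm)
  have h': "h \<in> borel_measurable (S \<Otimes>\<^sub>M Pm)"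
    using h by (simp cong: measurable_cong_sets sets_pair_measure_cong add: sets_Pm)
  note [measurable] = h' \<tau>
  have "(\<lambda>p. indicator (all_le (\<tau> (fst p))) (snd p) * h p) \<in> borel_measurable (S \<Otimes>\<^sub>M Pm)"
    by measurable
  note [measurable] = Pm.borel_measurable_nn_integral_fst[OF this] Pm.borel_measurable_nn_integral_fst[OF h']
  have "(\<lambda>s. if 0 < norm_cdf (\<tau> s)
      then ennreal (1 / norm_cdf (\<tau> s)) ^ m * (\<integral>\<^sup>+ys. indicator (all_le (\<tau> s)) ys * h (s, ys) \<partial>Pm)
      else \<integral>\<^sup>+ys. h (s, ys) \<partial>Pm) \<in> borel_measurable S"
    by measurable
  moreover have "(\<integral>\<^sup>+ys. h (s, ys) \<partial>Tm (\<tau> s)) = (if 0 < norm_cdf (\<tau> s)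
      then ennreal (1 / norm_cdf (\<tau> s)) ^ m * (\<integral>\<^sup>+ys. indicator (all_le (\<tau> s)) ys * h (s, ys) \<partial>Pm)
      else \<integral>\<^sup>+ys. h (s, ys) \<partial>Pm)" if "s \<in> space S" for s
    using that h by (intro nn_integral_Tm) measurable
  ultimately show ?thesis by (simp cong: measurable_cong)
qed

end

locale norm_disintegration = norm_law P N m
  for P :: "'a::topological_space measure" and N m +
  fixes \<kappa> :: "real \<Rightarrow> 'a measure"
  assumes rcd: "is_rcd P (\<lambda>x. x) borel N borel \<kappa>"
begin

lemma prob_space_\<kappa>: "prob_space (\<kappa> t)" and sets_\<kappa>: "sets (\<kappa> t) = sets borel"
  using is_rcd_kernel[OF rcd] by simp_all

lemma measurable_\<kappa>: "\<kappa> \<in> borel \<rightarrow>\<^sub>M subprob_algebra borel"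
  using is_rcd_kernel[OF rcd] by simp

definition K :: "real \<Rightarrow> ((nat \<Rightarrow> 'a) \<times> 'a) measure" where
  "K t = distr (Tm t) Bm (ostat N m) \<Otimes>\<^sub>M \<kappa> t"

lemma prob_space_ostat_Tm: "prob_space (distr (Tm t) Bm (ostat N m))"
  by (intro prob_space.prob_space_distr prob_space_PiM prob_space_trunc_law)
    (simp add: sets_Tm cong: measurable_cong_sets)

lemma sets_K: "sets (K t) = sets (Bm \<Otimes>\<^sub>M borel)"
  unfolding K_def by (intro sets_pair_measure_cong) (simp_all add: sets_\<kappa>)

lemma prob_space_K: "prob_space (K t)"
  unfolding K_def by (intro prob_space_pair prob_space_ostat_Tm prob_space_\<kappa>)

lemma nn_integral_K:
  assumes f: "f \<in> borel_measurable (Bm \<Otimes>\<^sub>M borel)"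
  shows "(\<integral>\<^sup>+z. f z \<partial>K t) = (\<integral>\<^sup>+x. \<integral>\<^sup>+ys. f (ostat N m ys, x) \<partial>Tm t \<partial>\<kappa> t)"
proof -
  interpret Q: prob_space "distr (Tm t) Bm (ostat N m)" by (rule prob_space_ostat_Tm)
  interpret \<kappa>: prob_space "\<kappa> t" by (rule prob_space_\<kappa>)
  interpret QK: pair_sigma_finite "distr (Tm t) Bm (ostat N m)" "\<kappa> t" ..
  have "f \<in> borel_measurable (distr (Tm t) Bm (ostat N m) \<Otimes>\<^sub>M \<kappa> t)"
    using f by (simp cong: measurable_cong_sets sets_pair_measure_cong add: sets_\<kappa>)
  then have "(\<integral>\<^sup>+z. f z \<partial>K t) = (\<integral>\<^sup>+x. \<integral>\<^sup>+q. f (q, x) \<partial>distr (Tm t) Bm (ostat N m) \<partial>\<kappa> t)"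
    unfolding K_def by (rule QK.nn_integral_snd[symmetric])
  also have "\<dots> = (\<integral>\<^sup>+x. \<integral>\<^sup>+ys. f (ostat N m ys, x) \<partial>Tm t \<partial>\<kappa> t)"
    using f sets_\<kappa> by (intro nn_integral_cong nn_integral_distr)
      (auto simp: sets_Tm cong: measurable_cong_sets)
  finally show ?thesis .
qed

lemma measurable_nn_integral_K:
  assumes f[measurable]: "f \<in> borel_measurable (borel \<Otimes>\<^sub>M (Bm \<Otimes>\<^sub>M borel))"
  shows "(\<lambda>t. \<integral>\<^sup>+z. f (t, z) \<partial>K t) \<in> borel_measurable borel"
proof -
  have "(\<lambda>(p, ys). f (fst p, (ostat N m ys, snd p))) \<in> borel_measurable ((borel \<Otimes>\<^sub>M borel) \<Otimes>\<^sub>M Bm)"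
    by measurable
  from measurable_nn_integral_Tm[OF this measurable_fst]
  have "(\<lambda>p. \<integral>\<^sup>+ys. f (fst p, (ostat N m ys, snd p)) \<partial>Tm (fst p)) \<in> borel_measurable (borel \<Otimes>\<^sub>M borel)"
    by (simp only: prod.case)
  then have "(\<lambda>t. \<integral>\<^sup>+x. \<integral>\<^sup>+ys. f (t, (ostat N m ys, x)) \<partial>Tm t \<partial>\<kappa> t) \<in> borel_measurable borel"
    by (intro nn_integral_measurable_subprob_algebra2[OF _ measurable_\<kappa>]) (simp add: case_prod_beta')
  then show ?thesis
    by (simp add: nn_integral_K)
qed

lemma nn_integral_disintegration:
  assumes f[measurable]: "f \<in> borel_measurable (borel \<Otimes>\<^sub>M (Bm \<Otimes>\<^sub>M borel))"
  shows "(\<integral>\<^sup>+x. \<integral>\<^sup>+ys. when_top (\<lambda>z. f (N (snd z), z)) (ys, x) \<partial>Pm \<partial>P)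
    = (\<integral>\<^sup>+t. ennreal (norm_cdf t) ^ m * (\<integral>\<^sup>+z. f (t, z) \<partial>K t) \<partial>distr P borel N)"
proof -
  interpret Pm: prob_space Pm by (rule prob_space_Pm)
  define g where "g p = (\<integral>\<^sup>+ys. indicator (all_le (fst p)) ys * f (fst p, (ostat N m ys, snd p)) \<partial>Pm)" for p
  have "(\<lambda>(p, ys). indicator (all_le (fst p)) ys * f (fst p, (ostat N m ys, snd p))) \<in> borel_measurable ((borel \<Otimes>\<^sub>M borel) \<Otimes>\<^sub>M Pm)"
    by measurable
  from Pm.borel_measurable_nn_integral_fst[OF this]
  have g: "g \<in> borel_measurable (borel \<Otimes>\<^sub>M borel)"
    by (simp add: g_def[abs_def])
  have "(\<integral>\<^sup>+x. \<integral>\<^sup>+ys. when_top (\<lambda>z. f (N (snd z), z)) (ys, x) \<partial>Pm \<partial>P) = (\<integral>\<^sup>+x. g (N x, x) \<partial>P)"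
    by (simp add: g_def when_top_def)
  also have "\<dots> = (\<integral>\<^sup>+t. \<integral>\<^sup>+x. g (t, x) \<partial>\<kappa> t \<partial>distr P borel N)"
    by (rule is_rcd_nn_integral[OF P.prob_space_axioms sets_P measurable_N rcd g])
  also have "\<dots> = (\<integral>\<^sup>+t. ennreal (norm_cdf t) ^ m * (\<integral>\<^sup>+z. f (t, z) \<partial>K t) \<partial>distr P borel N)"
  proof (rule nn_integral_cong)
    fix t
    have g_eq: "g (t, x) = ennreal (norm_cdf t) ^ m * (\<integral>\<^sup>+ys. f (t, (ostat N m ys, x)) \<partial>Tm t)" for x
      unfolding g_def by (simp add: nn_integral_all_le)
    have "(\<lambda>(x, ys). f (t, (ostat N m ys, x))) \<in> borel_measurable (borel \<Otimes>\<^sub>M Bm)"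
      by measurable
    from measurable_nn_integral_Tm[OF this measurable_const]
    have "(\<lambda>x. \<integral>\<^sup>+ys. f (t, (ostat N m ys, x)) \<partial>Tm t) \<in> borel_measurable (\<kappa> t)"
      unfolding measurable_cong_sets[OF sets_\<kappa> refl] by (simp only: prod.case UNIV_I space_borel)
    then show "(\<integral>\<^sup>+x. g (t, x) \<partial>\<kappa> t) = ennreal (norm_cdf t) ^ m * (\<integral>\<^sup>+z. f (t, z) \<partial>K t)"
      by (simp add: g_eq nn_integral_cmult nn_integral_K)
  qed
  finally show ?thesis .
qed

end

section \<open>The largest order statistic\<close>

locale norm_sample = prob_space M
  for M :: "'o measure" +
  fixes X :: "nat \<Rightarrow> 'o \<Rightarrow> 'a::euclidean_space" and P :: "'a measure" and N :: "'a \<Rightarrow> real" and m :: nat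
  assumes is_norm_N: "is_norm N"
    and random_X[measurable]: "\<And>i. i < Suc m \<Longrightarrow> X i \<in> borel_measurable M"
    and indep_X: "indep_vars (\<lambda>_. borel) X {..<Suc m}"
    and distr_X: "\<And>i. i < Suc m \<Longrightarrow> distr M borel (X i) = P"
    and continuous_norm_law: "absolutely_continuous lborel (distr P borel N)"
begin

sublocale norm_law P N m
proof -
  have "P = distr M borel (X 0)" using distr_X[of 0] by simp
  then show "norm_law P N"
    by (intro norm_law.intro norm_law_axioms.intro)
      (simp_all add: prob_space_distr borel_measurable_is_norm[OF is_norm_N])
qed

definition lower_max :: "'o \<Rightarrow> (nat \<Rightarrow> 'a) \<times> 'a" where
  "lower_max \<omega> = (restrict (ostat N (Suc m) (\<lambda>i. X i \<omega>)) {..<m}, ostat N (Suc m) (\<lambda>i. X i \<omega>) m)"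

definition single_out :: "nat \<Rightarrow> 'o \<Rightarrow> (nat \<Rightarrow> 'a) \<times> 'a" where
  "single_out j \<omega> = (\<lambda>i\<in>{..<m}. X (skip j i) \<omega>, X j \<omega>)"

lemma measurable_lower_max[measurable]: "lower_max \<in> M \<rightarrow>\<^sub>M Bm \<Otimes>\<^sub>M borel"
proof -
  have "(\<lambda>\<omega>. ostat N (Suc m) (\<lambda>i\<in>{..<Suc m}. X i \<omega>)) \<in> M \<rightarrow>\<^sub>M PiM {..<Suc m} (\<lambda>_. borel)"
    by (intro measurable_compose[OF _ measurable_ostat[OF measurable_N]] measurable_restrict) auto
  moreover have "ostat N (Suc m) (\<lambda>i\<in>{..<Suc m}. X i \<omega>) = ostat N (Suc m) (\<lambda>i. X i \<omega>)" for \<omega>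
    by (rule ostat_cong) simp
  ultimately have "(\<lambda>\<omega>. ostat N (Suc m) (\<lambda>i. X i \<omega>)) \<in> M \<rightarrow>\<^sub>M PiM {..<Suc m} (\<lambda>_. borel)"
    by simp
  then show ?thesis
    unfolding lower_max_def by (intro measurable_Pair measurable_restrict_subset) auto
qed

lemma measurable_single_out[measurable]:
  assumes j: "j < Suc m"
  shows "single_out j \<in> M \<rightarrow>\<^sub>M Bm \<Otimes>\<^sub>M borel"
  unfolding single_out_def by (intro measurable_Pair measurable_restrict random_X skip_less j) auto

lemma distr_single_out: "j < Suc m \<Longrightarrow> distr M (Bm \<Otimes>\<^sub>M borel) (single_out j) = Pm \<Otimes>\<^sub>M P"
  unfolding single_out_def by (rule distr_single_out_iid[OF indep_X random_X distr_X])

lemma AE_norm_neq: "AE x in P. N x \<noteq> c"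
proof -
  have "{c} \<in> null_sets lborel"
    by (simp add: countable_imp_null_set_lborel)
  with continuous_norm_law have "{c} \<in> null_sets (distr P borel N)"
    unfolding absolutely_continuous_def by blast
  then have "N -` {c} \<inter> space P \<in> null_sets P"
    by (simp add: null_sets_distr_iff)
  then show ?thesis
    by (rule AE_I') auto
qed

lemma AE_distinct_norms: "AE \<omega> in M. \<forall>i<Suc m. \<forall>k<Suc m. i \<noteq> k \<longrightarrow> N (X i \<omega>) \<noteq> N (X k \<omega>)"
proof -
  interpret Pm: prob_space Pm by (rule prob_space_Pm)
  interpret pair_sigma_finite Pm P ..
  have "AE \<omega> in M. N (X i \<omega>) \<noteq> N (X k \<omega>)" if ik: "i < Suc m" "k < Suc m" "i \<noteq> k" for i k
  proof -
    obtain i' where i': "i' < m" "skip k i' = i"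
      using skip_image[OF ik(2)] ik by (metis Diff_iff imageE lessThan_iff singletonD)
    have [measurable]: "(\<lambda>z. fst z i') \<in> borel_measurable (Bm \<Otimes>\<^sub>M borel)"
      using i' by (intro measurable_compose[OF measurable_fst measurable_component_singleton]) auto
    have "Measurable.pred (Pm \<Otimes>\<^sub>M P) (\<lambda>z. N (snd z) \<noteq> N (fst z i'))"
      by measurable
    then have "AE z in Pm \<Otimes>\<^sub>M P. N (snd z) \<noteq> N (fst z i')"
      by (intro AE_pair_measure) (auto intro!: AE_I2 AE_norm_neq simp: pred_def)
    then have "AE z in distr M (Bm \<Otimes>\<^sub>M borel) (single_out k). N (snd z) \<noteq> N (fst z i')"
      unfolding distr_single_out[OF ik(2)] .
    then have "AE \<omega> in M. N (snd (single_out k \<omega>)) \<noteq> N (fst (single_out k \<omega>) i')"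
      by (rule AE_distrD[OF measurable_single_out[OF ik(2)]])
    then show ?thesis
      using i' by (simp add: single_out_def eq_commute)
  qed
  then have "AE \<omega> in M. \<forall>i\<in>{..<Suc m}. \<forall>k\<in>{..<Suc m}. i \<noteq> k \<longrightarrow> N (X i \<omega>) \<noteq> N (X k \<omega>)"
    by (intro AE_finite_allI AE_impI) auto
  then show ?thesis
    by (simp only: Ball_def lessThan_iff)
qed

lemma lower_max_eq_sum_when_top:
  assumes distinct: "\<forall>i<Suc m. \<forall>k<Suc m. i \<noteq> k \<longrightarrow> N (X i \<omega>) \<noteq> N (X k \<omega>)"
  shows "f (lower_max \<omega>) = (\<Sum>j<Suc m. when_top f (single_out j \<omega>))"
proof -
  let ?x = "\<lambda>i. X i \<omega>"
  let ?max = "Max ((\<lambda>i. N (?x i)) ` {..<Suc m})"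
  have "?max \<in> (\<lambda>i. N (?x i)) ` {..<Suc m}" by (intro Max_in) auto
  then obtain j0 where j0_less: "j0 < Suc m" and j0_eq: "N (?x j0) = ?max" by auto
  have j0_max: "N (?x i) < N (?x j0)" if "i < Suc m" "i \<noteq> j0" for i
  proof -
    have "N (?x i) \<le> N (?x j0)" unfolding j0_eq using that by (intro Max_ge) auto
    moreover have "N (?x i) \<noteq> N (?x j0)" using distinct that j0_less by blast
    ultimately show ?thesis by simp
  qed
  have "when_top f (single_out j0 \<omega>) = f (lower_max \<omega>)"
  proof -
    have "fst (single_out j0 \<omega>) \<in> all_le (N (?x j0))"
      using j0_max[OF skip_less[OF j0_less] skip_neq] by (simp add: single_out_def all_le_def less_imp_le)
    moreover have "ostat N m (fst (single_out j0 \<omega>)) = ostat N m (?x \<circ> skip j0)"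
      unfolding single_out_def by (intro ostat_cong) simp
    ultimately show ?thesis
      using ostat_strict_max[where x = ?x and N = N, OF j0_less j0_max]
      by (simp add: when_top_def lower_max_def single_out_def)
  qed
  moreover have "when_top f (single_out j \<omega>) = 0" if "j < Suc m" "j \<noteq> j0" for j
  proof -
    obtain i where i: "i < m" "skip j i = j0"
      using skip_image[OF \<open>j < Suc m\<close>] j0_less \<open>j \<noteq> j0\<close> by (metis Diff_iff imageE lessThan_iff singletonD)
    then have "\<not> N (X (skip j i) \<omega>) \<le> N (?x j)"
      using j0_max[OF that] by simp
    with i have "fst (single_out j \<omega>) \<notin> all_le (N (?x j))"
      by (auto simp: single_out_def all_le_def)
    then show ?thesis
      by (simp add: when_top_def split_beta single_out_def)
  qed
  then have "(\<Sum>j\<in>{..<Suc m} - {j0}. when_top f (single_out j \<omega>)) = 0"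
    by (intro sum.neutral) auto
  ultimately show ?thesis
    using sum.remove[of "{..<Suc m}" j0 "\<lambda>j. when_top f (single_out j \<omega>)"] j0_less by simp
qed

lemma nn_integral_lower_max:
  assumes f[measurable]: "f \<in> borel_measurable (Bm \<Otimes>\<^sub>M borel)"
  shows "(\<integral>\<^sup>+\<omega>. f (lower_max \<omega>) \<partial>M) = of_nat (Suc m) * (\<integral>\<^sup>+x. \<integral>\<^sup>+ys. when_top f (ys, x) \<partial>Pm \<partial>P)"
proof -
  interpret Pm: prob_space Pm by (rule prob_space_Pm)
  interpret pair_sigma_finite Pm P ..
  have "AE \<omega> in M. f (lower_max \<omega>) = (\<Sum>j<Suc m. when_top f (single_out j \<omega>))"
    using AE_distinct_norms by eventually_elim (rule lower_max_eq_sum_when_top)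
  then have "(\<integral>\<^sup>+\<omega>. f (lower_max \<omega>) \<partial>M) = (\<integral>\<^sup>+\<omega>. (\<Sum>j<Suc m. when_top f (single_out j \<omega>)) \<partial>M)"
    by (rule nn_integral_cong_AE)
  also have "\<dots> = (\<Sum>j<Suc m. \<integral>\<^sup>+\<omega>. when_top f (single_out j \<omega>) \<partial>M)"
    by (intro nn_integral_sum) measurable
  also have "\<dots> = (\<Sum>j<Suc m. \<integral>\<^sup>+z. when_top f z \<partial>(Pm \<Otimes>\<^sub>M P))"
  proof (intro sum.cong refl)
    fix j assume "j \<in> {..<Suc m}"
    then have "(\<integral>\<^sup>+\<omega>. when_top f (single_out j \<omega>) \<partial>M) = (\<integral>\<^sup>+z. when_top f z \<partial>distr M (Bm \<Otimes>\<^sub>M borel) (single_out j))"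
      by (intro nn_integral_distr[symmetric]) measurable
    also have "\<dots> = (\<integral>\<^sup>+z. when_top f z \<partial>(Pm \<Otimes>\<^sub>M P))"
      using \<open>j \<in> {..<Suc m}\<close> by (simp add: distr_single_out)
    finally show "(\<integral>\<^sup>+\<omega>. when_top f (single_out j \<omega>) \<partial>M) = (\<integral>\<^sup>+z. when_top f z \<partial>(Pm \<Otimes>\<^sub>M P))" .
  qed
  also have "(\<integral>\<^sup>+z. when_top f z \<partial>(Pm \<Otimes>\<^sub>M P)) = (\<integral>\<^sup>+x. \<integral>\<^sup>+ys. when_top f (ys, x) \<partial>Pm \<partial>P)"
    by (intro nn_integral_snd[symmetric]) (simp cong: measurable_cong_sets sets_pair_measure_cong add: sets_Pm sets_P)
  finally show ?thesis by simp
qed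

end

locale norm_sample_rcd = norm_sample M X P N m
  for M :: "'o measure" and X :: "nat \<Rightarrow> 'o \<Rightarrow> 'a::euclidean_space" and P N m +
  fixes \<kappa> :: "real \<Rightarrow> 'a measure"
  assumes rcd_\<kappa>: "is_rcd P (\<lambda>x. x) borel N borel \<kappa>"
begin

sublocale norm_disintegration P N m \<kappa>
  by unfold_locales (rule rcd_\<kappa>)

lemma nn_integral_max_order_stat:
  assumes [measurable]: "f \<in> borel_measurable (borel \<Otimes>\<^sub>M (Bm \<Otimes>\<^sub>M borel))"
  shows "(\<integral>\<^sup>+\<omega>. f (N (snd (lower_max \<omega>)), lower_max \<omega>) \<partial>M)
    = of_nat (Suc m) * (\<integral>\<^sup>+t. ennreal (norm_cdf t) ^ m * (\<integral>\<^sup>+z. f (t, z) \<partial>K t) \<partial>distr P borel N)"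
  using nn_integral_lower_max[of "\<lambda>z. f (N (snd z), z)"] nn_integral_disintegration[of f] by simp

lemma is_rcd_lower_max: "is_rcd M lower_max (Bm \<Otimes>\<^sub>M borel) (\<lambda>\<omega>. N (snd (lower_max \<omega>))) borel K"
  unfolding is_rcd_def
proof (intro conjI ballI)
  fix A :: "((nat \<Rightarrow> 'a) \<times> 'a) set" and B :: "real set"
  assume A[measurable]: "A \<in> sets (Bm \<Otimes>\<^sub>M borel)" and B[measurable]: "B \<in> sets borel"
  let ?T = "\<lambda>\<omega>. N (snd (lower_max \<omega>))"
  have K_A[measurable]: "(\<lambda>t. emeasure (K t) A) \<in> borel_measurable borel"
    using measurable_nn_integral_K[of "\<lambda>(t, z). indicator A z"] A by (simp add: sets_K)
  have "emeasure M {\<omega> \<in> space M. lower_max \<omega> \<in> A \<and> ?T \<omega> \<in> B}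
      = (\<integral>\<^sup>+\<omega>. indicator {\<omega> \<in> space M. lower_max \<omega> \<in> A \<and> ?T \<omega> \<in> B} \<omega> \<partial>M)"
    by (rule nn_integral_indicator[symmetric]) measurable
  also have "\<dots> = (\<integral>\<^sup>+\<omega>. indicator B (?T \<omega>) * indicator A (lower_max \<omega>) \<partial>M)"
    by (intro nn_integral_cong) (auto simp: indicator_def)
  also have "\<dots> = of_nat (Suc m)
      * (\<integral>\<^sup>+t. ennreal (norm_cdf t) ^ m * (\<integral>\<^sup>+z. indicator B t * indicator A z \<partial>K t) \<partial>distr P borel N)"
    using nn_integral_max_order_stat[of "\<lambda>(t, z). indicator B t * indicator A z"] by simp
  also have "\<dots> = of_nat (Suc m) * (\<integral>\<^sup>+t. ennreal (norm_cdf t) ^ m * (indicator B t * emeasure (K t) A) \<partial>distr P borel N)"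
    using A by (simp add: nn_integral_cmult_indicator sets_K)
  also have "\<dots> = (\<integral>\<^sup>+\<omega>. indicator B (?T \<omega>) * emeasure (K (?T \<omega>)) A \<partial>M)"
    using nn_integral_max_order_stat[of "\<lambda>(t, z). indicator B t * emeasure (K t) A"]
      prob_space.emeasure_space_1[OF prob_space_K]
    by (simp add: ac_simps)
  also have "\<dots> = (\<integral>\<^sup>+t. indicator B t * emeasure (K t) A \<partial>distr M borel ?T)"
    by (simp add: nn_integral_distr)
  finally show "emeasure M {\<omega> \<in> space M. lower_max \<omega> \<in> A \<and> ?T \<omega> \<in> B}
      = (\<integral>\<^sup>+t. indicator B t * emeasure (K t) A \<partial>distr M borel ?T)" .
next
  fix A :: "((nat \<Rightarrow> 'a) \<times> 'a) set" assume "A \<in> sets (Bm \<Otimes>\<^sub>M borel)"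
  then show "(\<lambda>t. emeasure (K t) A) \<in> borel_measurable borel"
    using measurable_nn_integral_K[of "\<lambda>(t, z). indicator A z"] by (simp add: sets_K)
qed (simp_all add: prob_space_K sets_K)

end

theorem lemma2p2:
  fixes M :: "'o measure"
    and X :: "nat \<Rightarrow> 'o \<Rightarrow> real ^ 'd"
    and P :: "(real ^ 'd) measure"
    and N :: "real ^ 'd \<Rightarrow> real"
    and n :: nat
    and \<kappa> :: "real \<Rightarrow> (real ^ 'd) measure"
  assumes "prob_space M"
    and "is_norm N"
    and "1 \<le> n"
    and "\<forall>i<n. X i \<in> borel_measurable M"
    and "prob_space.indep_vars M (\<lambda>_. borel) X {..<n}"
    and "\<forall>i<n. distr M borel (X i) = P"
    and "absolutely_continuous lborel (distr P borel N)"
    and "is_rcd P (\<lambda>x. x) borel N borel \<kappa>"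
  shows "is_rcd M
           (\<lambda>\<omega>. (restrict (ostat N n (\<lambda>i. X i \<omega>)) {..<n - 1}, ostat N n (\<lambda>i. X i \<omega>) (n - 1)))
           (PiM {..<n - 1} (\<lambda>_. borel) \<Otimes>\<^sub>M borel)
           (\<lambda>\<omega>. N (ostat N n (\<lambda>i. X i \<omega>) (n - 1)))
           borel
           (\<lambda>y. distr (PiM {..<n - 1} (\<lambda>_. trunc_law P N y)) (PiM {..<n - 1} (\<lambda>_. borel))
                      (ostat N (n - 1)) \<Otimes>\<^sub>M \<kappa> y)"
proof -
  obtain m where n: "n = Suc m"
    using \<open>1 \<le> n\<close> by (cases n) auto
  interpret norm_sample_rcd M X P N m \<kappa>
    using assms
    by (intro norm_sample_rcd.intro norm_sample.intro norm_sample_axioms.intro norm_sample_rcd_axioms.intro)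
      (simp_all add: n)
  show ?thesis
    using is_rcd_lower_max unfolding lower_max_def K_def n by simp
qed

end
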